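(* Let $d\ge1$ and let $G$ be the unweighted $d$-dimensional grid graph with side lengths $n_1,\dots,n_d$, having at least one inner node (equivalently $n_j\ge3$ for all $j$). Let $\mathfrak{L}=D^{-1/2}LD^{-1/2}=I-D^{-1/2}SD^{-1/2}$ be its normalized Laplacian. For an integer index vector $\mathbf{z}=[z_1,\dots,z_d]$ with $0\le z_j\le n_j-1$ and a real vector $\boldsymbol\delta^{\mathbf{z}}=[\delta^{\mathbf{z}}_1,\dots,\delta^{\mathbf{z}}_d]$ write $\theta_j=\frac{1}{n_j-1}\left(z_j\pi-2\delta^{\mathbf{z}}_j\right)$. The eigenvalues of $\mathfrak{L}$ are of the form $$\lambda_{\mathbf{z}}=1+\frac1d\sum_{j=1}^d\cos(\theta_j),$$ where $(\lambda_{\mathbf{z}},\boldsymbol\delta^{\mathbf{z}})$ is a solution of the system consisting of the equation $$2d\,\lambda_{\mathbf{z}}=\sum_{j=1}^d\bigl(2+2\cos(\theta_j)\bigr)$$ together with, for each $l=1,\dots,d$, the equation $$\lambda_{\mathbf{z}}=1+\cos(\theta_l)+\tan(\delta^{\mathbf{z}}_l)\sin(\theta_l),$$ and the corresponding eigenvectors $\mathbf{v}_{\mathbf{z}}$ have components $$(\mathbf{v}_{\mathbf{z}})_{\mathbf{x}}=D_{\mathbf{x}\mathbf{x}}^{1/2}\prod_{j=1}^d(-1)^{x_j}\cos\left((x_j-1)\theta_j+\delta^{\mathbf{z}}_j\right),\qquad \mathbf{x}=[x_1,\dots,x_d]\in V.$$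
   Context: The grid graph has vertex set $V=\{[x_1,\dots,x_d]\in\mathbb{Z}^d:1\le x_j\le n_j\}$, two vertices adjacent iff they differ in exactly one coordinate by exactly $1$. $S$ is the $0/1$ adjacency matrix, $D$ the diagonal degree matrix and $L=D-S$. An inner node is a vertex having two neighbours in every dimension (i.e. $1<x_j<n_j$ for all $j$). The entries $\delta^{\mathbf{z}}_j$ are called shifts. *)

theory Defs
  imports Complex_Main
begin

text \<open>Grid graph with d dimensions and side lengths n 0, ..., n (d-1)
  (dimensions are indexed 0..d-1 instead of 1..d).\<close>

definition grid_V :: "nat \<Rightarrow> (nat \<Rightarrow> nat) \<Rightarrow> (nat \<Rightarrow> nat) set" where
  "grid_V d n = {x. (\<forall>j<d. 1 \<le> x j \<and> x j \<le> n j) \<and> (\<forall>j\<ge>d. x j = 0)}"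

definition grid_adj :: "nat \<Rightarrow> (nat \<Rightarrow> nat) \<Rightarrow> (nat \<Rightarrow> nat) \<Rightarrow> (nat \<Rightarrow> nat) \<Rightarrow> bool" where
  "grid_adj d n x y \<longleftrightarrow> x \<in> grid_V d n \<and> y \<in> grid_V d n \<and>
     (\<exists>j<d. \<bar>int (x j) - int (y j)\<bar> = 1 \<and> (\<forall>i. i \<noteq> j \<longrightarrow> x i = y i))"

definition grid_S :: "nat \<Rightarrow> (nat \<Rightarrow> nat) \<Rightarrow> (nat \<Rightarrow> nat) \<Rightarrow> (nat \<Rightarrow> nat) \<Rightarrow> real" where
  "grid_S d n x y = (if grid_adj d n x y then 1 else 0)"

definition grid_deg :: "nat \<Rightarrow> (nat \<Rightarrow> nat) \<Rightarrow> (nat \<Rightarrow> nat) \<Rightarrow> real" where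
  "grid_deg d n x = (\<Sum>y\<in>grid_V d n. grid_S d n x y)"

definition grid_L :: "nat \<Rightarrow> (nat \<Rightarrow> nat) \<Rightarrow> (nat \<Rightarrow> nat) \<Rightarrow> (nat \<Rightarrow> nat) \<Rightarrow> real" where
  "grid_L d n x y = (if x = y then grid_deg d n x else 0) - grid_S d n x y"

definition grid_nlap :: "nat \<Rightarrow> (nat \<Rightarrow> nat) \<Rightarrow> (nat \<Rightarrow> nat) \<Rightarrow> (nat \<Rightarrow> nat) \<Rightarrow> real" where
  "grid_nlap d n x y =
     (1 / sqrt (grid_deg d n x)) * grid_L d n x y * (1 / sqrt (grid_deg d n y))"

definition is_eigenpair :: "('v set) \<Rightarrow> ('v \<Rightarrow> 'v \<Rightarrow> real) \<Rightarrow> real \<Rightarrow> ('v \<Rightarrow> real) \<Rightarrow> bool" where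
  "is_eigenpair V M lam v \<longleftrightarrow> (\<exists>x\<in>V. v x \<noteq> 0) \<and>
     (\<forall>x\<in>V. (\<Sum>y\<in>V. M x y * v y) = lam * v x)"

definition grid_theta :: "(nat \<Rightarrow> nat) \<Rightarrow> (nat \<Rightarrow> nat) \<Rightarrow> (nat \<Rightarrow> real) \<Rightarrow> nat \<Rightarrow> real" where
  "grid_theta n z \<delta> j = (real (z j) * pi - 2 * \<delta> j) / (real (n j) - 1)"

definition grid_vec :: "nat \<Rightarrow> (nat \<Rightarrow> nat) \<Rightarrow> (nat \<Rightarrow> nat) \<Rightarrow> (nat \<Rightarrow> real) \<Rightarrow> (nat \<Rightarrow> nat) \<Rightarrow> real" where
  "grid_vec d n z \<delta> x = sqrt (grid_deg d n x) *
     (\<Prod>j<d. (-1) ^ (x j) * cos ((real (x j) - 1) * grid_theta n z \<delta> j + \<delta> j))"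

end

theory Submission
  imports Defs
begin

text \<open>The vector is \<open>D\<^sup>1\<^sup>/\<^sup>2 u\<close> with \<open>u\<close> a product of one-dimensional modes
  \<open>f\<^sub>j(k) = (-1)\<^sup>k cos((k-1)\<theta>\<^sub>j + \<delta>\<^sub>j)\<close>, so it suffices to solve \<open>L u = \<lambda> D u\<close>.
  On the path \<open>1..n\<^sub>j\<close> the neighbour sum of \<open>f\<^sub>j\<close> is \<open>-2 cos \<theta>\<^sub>j f\<^sub>j(k)\<close> at inner
  points (three-term recurrence).  At \<open>k = 1\<close> it is \<open>(tan \<delta>\<^sub>j sin \<theta>\<^sub>j - cos \<theta>\<^sub>j) f\<^sub>j(1)\<close>,
  and since \<open>(n\<^sub>j - 1)\<theta>\<^sub>j = z\<^sub>j\<pi> - 2\<delta>\<^sub>j\<close> the mode is symmetric up to sign under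
  \<open>k \<mapsto> n\<^sub>j + 1 - k\<close>, which gives the same factor at \<open>k = n\<^sub>j\<close>.  Hence the adjacency matrix
  multiplies \<open>u\<close> at \<open>x\<close> by a sum of per-dimension factors, and the equations for \<open>\<lambda>\<close>
  turn \<open>D\<^sub>x\<^sub>x\<close> minus that sum into \<open>\<lambda> D\<^sub>x\<^sub>x\<close>.\<close>

definition path_mode :: "real \<Rightarrow> real \<Rightarrow> nat \<Rightarrow> real" where
  "path_mode \<theta> \<delta> k = (-1) ^ k * cos ((real k - 1) * \<theta> + \<delta>)"

definition path_nbrs :: "nat \<Rightarrow> nat \<Rightarrow> nat set" where
  "path_nbrs N k = {e. 1 \<le> e \<and> e \<le> N \<and> \<bar>int e - int k\<bar> = 1}"

lemma finite_path_nbrs: "finite (path_nbrs N k)"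
  by (rule finite_subset[of _ "{..N}"]) (auto simp: path_nbrs_def)

lemma path_mode_three_term:
  assumes "1 \<le> k"
  shows "path_mode \<theta> \<delta> (k - 1) + path_mode \<theta> \<delta> (k + 1) = -2 * cos \<theta> * path_mode \<theta> \<delta> k"
proof -
  define a where "a = (real k - 1) * \<theta> + \<delta>"
  obtain m where k: "k = Suc m" using assms by (cases k) auto
  have "path_mode \<theta> \<delta> (k - 1) + path_mode \<theta> \<delta> (k + 1) = - ((-1) ^ k * (cos (a - \<theta>) + cos (a + \<theta>)))"
    unfolding path_mode_def a_def k by (simp add: algebra_simps)
  also have "cos (a - \<theta>) + cos (a + \<theta>) = 2 * cos \<theta> * cos a"
    by (simp add: cos_add cos_diff)
  finally show ?thesis
    unfolding path_mode_def a_def by simp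
qed

lemma path_mode_left_end:
  assumes "cos \<delta> \<noteq> 0"
  shows "path_mode \<theta> \<delta> 2 = (tan \<delta> * sin \<theta> - cos \<theta>) * path_mode \<theta> \<delta> 1"
  using assms by (simp add: path_mode_def tan_def cos_add algebra_simps)

lemma path_mode_reflect:
  assumes \<theta>: "(real N - 1) * \<theta> = real z * pi - 2 * \<delta>" and k: "k \<le> N + 1"
  shows "path_mode \<theta> \<delta> (N + 1 - k) = (-1) ^ (N + 1 + z) * path_mode \<theta> \<delta> k"
proof -
  have angle: "(real (N + 1 - k) - 1) * \<theta> + \<delta> = real z * pi - ((real k - 1) * \<theta> + \<delta>)"
    using k \<theta> by (simp add: of_nat_diff algebra_simps)
  obtain m where m: "N + 1 = m + k"
    using k le_add_diff_inverse2 by metis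
  have sign: "(-1::real) ^ (N + 1 - k) = (-1) ^ (N + 1) * (-1) ^ k"
    using m by (simp add: power_add mult.assoc)
  show ?thesis
    unfolding path_mode_def angle sign
    by (simp add: cos_diff power_add)
qed

lemma path_mode_right_end:
  assumes "2 \<le> N" and "(real N - 1) * \<theta> = real z * pi - 2 * \<delta>" and "cos \<delta> \<noteq> 0"
  shows "path_mode \<theta> \<delta> (N - 1) = (tan \<delta> * sin \<theta> - cos \<theta>) * path_mode \<theta> \<delta> N"
proof -
  let ?s = "(-1::real) ^ (N + 1 + z)"
  have "path_mode \<theta> \<delta> (N - 1) = ?s * path_mode \<theta> \<delta> 2"
    using path_mode_reflect[OF assms(2), of 2] assms(1) by simp
  moreover have "path_mode \<theta> \<delta> N = ?s * path_mode \<theta> \<delta> 1"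
    using path_mode_reflect[OF assms(2), of 1] by simp
  ultimately show ?thesis
    using path_mode_left_end[OF assms(3), of \<theta>] by simp
qed

lemma path_nbrs_cases:
  assumes "2 \<le> N" and "1 \<le> k" and "k \<le> N"
  obtains "k = 1" "path_nbrs N k = {2}"
    | "k = N" "path_nbrs N k = {N - 1}"
    | "1 < k" "k < N" "path_nbrs N k = {k - 1, k + 1}"
proof -
  consider "k = 1" | "k = N" | "1 < k" "k < N"
    using assms by linarith
  then show thesis
  proof cases
    case 1
    then have "path_nbrs N k = {2}"
      using assms unfolding path_nbrs_def by auto
    with 1 show thesis by (rule that(1))
  next
    case 2
    then have "path_nbrs N k = {N - 1}"
      using assms unfolding path_nbrs_def by auto
    with 2 show thesis by (rule that(2))
  next
    case 3
    then have "path_nbrs N k = {k - 1, k + 1}"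
      unfolding path_nbrs_def by auto
    with 3 show thesis by (rule that(3))
  qed
qed

lemma card_path_nbrs:
  assumes "2 \<le> N" and "1 \<le> k" and "k \<le> N"
  shows "card (path_nbrs N k) = (if k = 1 \<or> k = N then 1 else 2)"
  using assms by (cases rule: path_nbrs_cases) auto

lemma sum_path_nbrs_path_mode:
  assumes N: "2 \<le> N" and k: "1 \<le> k" "k \<le> N"
    and \<theta>: "(real N - 1) * \<theta> = real z * pi - 2 * \<delta>" and \<delta>: "cos \<delta> \<noteq> 0"
  shows "(\<Sum>e\<in>path_nbrs N k. path_mode \<theta> \<delta> e)
    = (if k = 1 \<or> k = N then tan \<delta> * sin \<theta> - cos \<theta> else -2 * cos \<theta>) * path_mode \<theta> \<delta> k"
  using N k
proof (cases rule: path_nbrs_cases)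
  case 1
  then show ?thesis using path_mode_left_end[OF \<delta>] by simp
next
  case 2
  then show ?thesis using path_mode_right_end[OF N \<theta> \<delta>] N by simp
next
  case 3
  then show ?thesis using path_mode_three_term[OF k(1)] by simp
qed

lemma finite_grid_V: "finite (grid_V d n)"
proof (rule finite_subset)
  let ?B = "sum n {..<d}"
  show "grid_V d n \<subseteq> {x. \<forall>j. (j \<in> {..<d} \<longrightarrow> x j \<in> {0..?B}) \<and> (j \<notin> {..<d} \<longrightarrow> x j = 0)}"
  proof
    fix x assume x: "x \<in> grid_V d n"
    have "n j \<le> ?B" if "j < d" for j
      using that by (intro member_le_sum) auto
    then show "x \<in> {x. \<forall>j. (j \<in> {..<d} \<longrightarrow> x j \<in> {0..?B}) \<and> (j \<notin> {..<d} \<longrightarrow> x j = 0)}"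
      using x unfolding grid_V_def by (auto intro: order_trans)
  qed
  show "finite {x. \<forall>j. (j \<in> {..<d} \<longrightarrow> x j \<in> {0..?B}) \<and> (j \<notin> {..<d} \<longrightarrow> x j = 0)}"
    by (intro finite_set_of_finite_funs) auto
qed

lemma grid_nbrs_eq_image:
  assumes x: "x \<in> grid_V d n"
  shows "{y \<in> grid_V d n. grid_adj d n x y}
    = (\<lambda>(j, e). x(j := e)) ` Sigma {..<d} (\<lambda>j. path_nbrs (n j) (x j))"
proof (intro set_eqI iffI)
  fix y assume "y \<in> {y \<in> grid_V d n. grid_adj d n x y}"
  then obtain j where y: "y \<in> grid_V d n" and j: "j < d" "\<bar>int (x j) - int (y j)\<bar> = 1"
    and same: "\<forall>i. i \<noteq> j \<longrightarrow> x i = y i"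
    unfolding grid_adj_def by auto
  have "y = x(j := y j)" using same by (auto simp: fun_eq_iff)
  moreover have "(j, y j) \<in> Sigma {..<d} (\<lambda>j. path_nbrs (n j) (x j))"
    using y j unfolding path_nbrs_def grid_V_def by auto
  ultimately show "y \<in> (\<lambda>(j, e). x(j := e)) ` Sigma {..<d} (\<lambda>j. path_nbrs (n j) (x j))"
    by (metis (no_types, lifting) case_prod_conv image_eqI)
next
  fix y assume "y \<in> (\<lambda>(j, e). x(j := e)) ` Sigma {..<d} (\<lambda>j. path_nbrs (n j) (x j))"
  then obtain j e where y: "y = x(j := e)" and j: "j < d" and e: "e \<in> path_nbrs (n j) (x j)"
    by auto
  have "y \<in> grid_V d n"
    using x y j e unfolding grid_V_def path_nbrs_def by auto
  moreover have "grid_adj d n x y"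
    using x \<open>y \<in> grid_V d n\<close> y j e unfolding grid_adj_def path_nbrs_def
    by (auto intro!: exI[of _ j])
  ultimately show "y \<in> {y \<in> grid_V d n. grid_adj d n x y}" by simp
qed

lemma inj_on_fun_upd_path_nbrs:
  "inj_on (\<lambda>(j, e). x(j := e)) (Sigma {..<d} (\<lambda>j. path_nbrs (n j) (x j)))"
proof (rule inj_onI, clarify)
  fix j e j' e'
  assume e: "e \<in> path_nbrs (n j) (x j)" and eq: "x(j := e) = x(j' := e')"
  show "j = j' \<and> e = e'"
  proof (cases "j = j'")
    case True
    then show ?thesis using fun_cong[OF eq, of j] by simp
  next
    case False
    then have "e = x j" using fun_cong[OF eq, of j] by simp
    then show ?thesis using e unfolding path_nbrs_def by simp
  qed
qed

lemma sum_grid_S: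
  assumes "x \<in> grid_V d n"
  shows "(\<Sum>y\<in>grid_V d n. grid_S d n x y * g y) = (\<Sum>j<d. \<Sum>e\<in>path_nbrs (n j) (x j). g (x(j := e)))"
proof -
  have "(\<Sum>y\<in>grid_V d n. grid_S d n x y * g y) = (\<Sum>y\<in>{y \<in> grid_V d n. grid_adj d n x y}. g y)"
    unfolding sum.inter_filter[OF finite_grid_V] by (intro sum.cong refl) (simp add: grid_S_def)
  also have "\<dots> = (\<Sum>(j, e)\<in>Sigma {..<d} (\<lambda>j. path_nbrs (n j) (x j)). g (x(j := e)))"
    unfolding grid_nbrs_eq_image[OF assms] sum.reindex[OF inj_on_fun_upd_path_nbrs]
    by (simp add: comp_def case_prod_beta)
  also have "\<dots> = (\<Sum>j<d. \<Sum>e\<in>path_nbrs (n j) (x j). g (x(j := e)))"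
    by (simp add: sum.Sigma finite_path_nbrs)
  finally show ?thesis .
qed

lemma grid_deg_eq_card:
  assumes "x \<in> grid_V d n"
  shows "grid_deg d n x = (\<Sum>j<d. real (card (path_nbrs (n j) (x j))))"
  using sum_grid_S[OF assms, of "\<lambda>_. 1"] by (simp add: grid_deg_def)

lemma sum_grid_S_prod:
  assumes x: "x \<in> grid_V d n"
    and eigen: "\<And>j. j < d \<Longrightarrow> (\<Sum>e\<in>path_nbrs (n j) (x j). f j e) = c j * f j (x j)"
  shows "(\<Sum>y\<in>grid_V d n. grid_S d n x y * (\<Prod>i<d. f i (y i)))
    = (\<Sum>j<d. c j) * (\<Prod>i<d. f i (x i))"
proof -
  let ?rest = "\<lambda>j. \<Prod>i\<in>{..<d} - {j}. f i (x i)"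
  have prod_upd: "(\<Prod>i<d. f i ((x(j := e)) i)) = f j e * ?rest j" if "j < d" for j e
  proof -
    have "(\<Prod>i\<in>{..<d} - {j}. f i ((x(j := e)) i)) = ?rest j"
      by (rule prod.cong) auto
    then show ?thesis
      using prod.remove[of "{..<d}" j "\<lambda>i. f i ((x(j := e)) i)"] that by simp
  qed
  have "(\<Sum>y\<in>grid_V d n. grid_S d n x y * (\<Prod>i<d. f i (y i)))
      = (\<Sum>j<d. (\<Sum>e\<in>path_nbrs (n j) (x j). f j e) * ?rest j)"
    unfolding sum_grid_S[OF x] sum_distrib_right
    by (intro sum.cong refl) (simp add: prod_upd del: fun_upd_apply)
  also have "\<dots> = (\<Sum>j<d. c j * (\<Prod>i<d. f i (x i)))"
  proof (intro sum.cong refl)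
    fix j assume "j \<in> {..<d}"
    then have "(\<Prod>i<d. f i (x i)) = f j (x j) * ?rest j"
      using prod_upd[of j "x j"] by simp
    then show "(\<Sum>e\<in>path_nbrs (n j) (x j). f j e) * ?rest j = c j * (\<Prod>i<d. f i (x i))"
      using \<open>j \<in> {..<d}\<close> by (simp add: eigen)
  qed
  finally show ?thesis
    by (simp add: sum_distrib_right)
qed

lemma sum_grid_L:
  assumes "x \<in> grid_V d n"
  shows "(\<Sum>y\<in>grid_V d n. grid_L d n x y * u y)
    = grid_deg d n x * u x - (\<Sum>y\<in>grid_V d n. grid_S d n x y * u y)"
proof -
  have "(\<Sum>y\<in>grid_V d n. grid_L d n x y * u y)
      = (\<Sum>y\<in>grid_V d n. if x = y then grid_deg d n x * u y else 0)
        - (\<Sum>y\<in>grid_V d n. grid_S d n x y * u y)"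
    unfolding sum_subtractf[symmetric] by (intro sum.cong refl) (simp add: grid_L_def algebra_simps)
  then show ?thesis
    using assms finite_grid_V by simp
qed

lemma grid_deg_pos:
  assumes "1 \<le> d" and "\<forall>j<d. 2 \<le> n j" and x: "x \<in> grid_V d n"
  shows "0 < grid_deg d n x"
proof -
  have "0 < card (path_nbrs (n j) (x j))" if "j < d" for j
    using that assms card_path_nbrs[of "n j" "x j"] unfolding grid_V_def by simp
  then show ?thesis
    unfolding grid_deg_eq_card[OF x] using assms(1)
    by (intro sum_pos) (auto simp: lessThan_empty_iff)
qed

lemma grid_nlap_eigen_of_generalized:
  assumes pos: "\<forall>y\<in>grid_V d n. 0 < grid_deg d n y" and x: "x \<in> grid_V d n"
    and gen: "(\<Sum>y\<in>grid_V d n. grid_L d n x y * u y) = lam * grid_deg d n x * u x"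
  shows "(\<Sum>y\<in>grid_V d n. grid_nlap d n x y * (sqrt (grid_deg d n y) * u y))
    = lam * (sqrt (grid_deg d n x) * u x)"
proof -
  have "(\<Sum>y\<in>grid_V d n. grid_nlap d n x y * (sqrt (grid_deg d n y) * u y))
      = (\<Sum>y\<in>grid_V d n. grid_L d n x y * u y) / sqrt (grid_deg d n x)"
    unfolding sum_divide_distrib
  proof (intro sum.cong refl)
    fix y assume "y \<in> grid_V d n"
    then have "0 < sqrt (grid_deg d n y)" using pos by simp
    then show "grid_nlap d n x y * (sqrt (grid_deg d n y) * u y)
        = grid_L d n x y * u y / sqrt (grid_deg d n x)"
      by (simp add: grid_nlap_def)
  qed
  also have "\<dots> = lam * u x * (grid_deg d n x / sqrt (grid_deg d n x))"
    unfolding gen by simp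
  also have "\<dots> = lam * (sqrt (grid_deg d n x) * u x)"
    using pos x by (simp add: real_div_sqrt less_imp_le)
  finally show ?thesis .
qed

definition grid_mode :: "nat \<Rightarrow> (nat \<Rightarrow> nat) \<Rightarrow> (nat \<Rightarrow> nat) \<Rightarrow> (nat \<Rightarrow> real) \<Rightarrow> (nat \<Rightarrow> nat) \<Rightarrow> real" where
  "grid_mode d n z \<delta> x = (\<Prod>j<d. path_mode (grid_theta n z \<delta> j) (\<delta> j) (x j))"

lemma grid_vec_eq: "grid_vec d n z \<delta> x = sqrt (grid_deg d n x) * grid_mode d n z \<delta> x"
  unfolding grid_vec_def grid_mode_def path_mode_def ..

lemma grid_theta_eq:
  assumes "2 \<le> n j"
  shows "(real (n j) - 1) * grid_theta n z \<delta> j = real (z j) * pi - 2 * \<delta> j"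
  using assms by (simp add: grid_theta_def)

lemma grid_mode_corner_nonzero:
  assumes "\<forall>j<d. cos (\<delta> j) \<noteq> 0"
  shows "grid_mode d n z \<delta> (\<lambda>j. if j < d then 1 else 0) \<noteq> 0"
  using assms by (simp add: grid_mode_def path_mode_def)

lemma sum_grid_L_grid_mode:
  assumes n: "\<forall>j<d. 2 \<le> n j" and \<delta>: "\<forall>j<d. cos (\<delta> j) \<noteq> 0"
    and lam_sum: "2 * real d * lam = (\<Sum>j<d. 2 + 2 * cos (grid_theta n z \<delta> j))"
    and lam_dim: "\<forall>j<d. lam = 1 + cos (grid_theta n z \<delta> j) + tan (\<delta> j) * sin (grid_theta n z \<delta> j)"
    and x: "x \<in> grid_V d n"
  shows "(\<Sum>y\<in>grid_V d n. grid_L d n x y * grid_mode d n z \<delta> y)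
    = lam * grid_deg d n x * grid_mode d n z \<delta> x"
proof -
  let ?\<theta> = "grid_theta n z \<delta>"
  let ?end = "\<lambda>j. x j = 1 \<or> x j = n j"
  define c where "c j = (if ?end j then tan (\<delta> j) * sin (?\<theta> j) - cos (?\<theta> j)
    else -2 * cos (?\<theta> j))" for j
  have x_range: "1 \<le> x j" "x j \<le> n j" if "j < d" for j
    using x that unfolding grid_V_def by auto
  have S: "(\<Sum>y\<in>grid_V d n. grid_S d n x y * grid_mode d n z \<delta> y)
      = (\<Sum>j<d. c j) * grid_mode d n z \<delta> x"
    unfolding grid_mode_def c_def
    using n \<delta> x_range grid_theta_eq
    by (intro sum_grid_S_prod[OF x] sum_path_nbrs_path_mode) auto
  have deg: "grid_deg d n x = (\<Sum>j<d. if ?end j then 1 else 2)"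
    unfolding grid_deg_eq_card[OF x] using n x_range
    by (intro sum.cong refl) (simp add: card_path_nbrs)
  have "grid_deg d n x - (\<Sum>j<d. c j)
      = (\<Sum>j<d. (2 + 2 * cos (?\<theta> j)) - lam * (2 - (if ?end j then 1 else 2)))"
    unfolding deg sum_subtractf[symmetric] using lam_dim
    by (intro sum.cong refl) (auto simp: c_def)
  also have "\<dots> = lam * grid_deg d n x"
    unfolding deg sum_subtractf lam_sum[symmetric] sum_distrib_left[symmetric]
    by (simp add: sum_subtractf algebra_simps)
  finally have "grid_deg d n x - (\<Sum>j<d. c j) = lam * grid_deg d n x" .
  then show ?thesis
    unfolding sum_grid_L[OF x] S by (simp flip: left_diff_distrib)
qed

theorem theorem7:
  fixes d :: nat and n :: "nat \<Rightarrow> nat" and z :: "nat \<Rightarrow> nat"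
    and \<delta> :: "nat \<Rightarrow> real" and lam :: real
  assumes "d \<ge> 1"
    and "\<forall>j<d. n j \<ge> 3"
    and "\<forall>j<d. z j \<le> n j - 1"
    and "\<forall>l<d. cos (\<delta> l) \<noteq> 0"
    and "2 * real d * lam = (\<Sum>j<d. 2 + 2 * cos (grid_theta n z \<delta> j))"
    and "\<forall>l<d. lam = 1 + cos (grid_theta n z \<delta> l) + tan (\<delta> l) * sin (grid_theta n z \<delta> l)"
  shows "lam = 1 + (1 / real d) * (\<Sum>j<d. cos (grid_theta n z \<delta> j))
    \<and> is_eigenpair (grid_V d n) (grid_nlap d n) lam (grid_vec d n z \<delta>)"
proof -
  note d = assms(1) and \<delta> = assms(4) and lam_sum = assms(5) and lam_dim = assms(6)
  have n: "\<forall>j<d. 2 \<le> n j" using assms(2) by auto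
  have "2 * real d * lam = 2 * real d * (1 + (1 / real d) * (\<Sum>j<d. cos (grid_theta n z \<delta> j)))"
    using d unfolding lam_sum by (simp add: sum.distrib sum_distrib_left field_simps)
  then have lam: "lam = 1 + (1 / real d) * (\<Sum>j<d. cos (grid_theta n z \<delta> j))"
    using d by simp
  have pos: "\<forall>y\<in>grid_V d n. 0 < grid_deg d n y"
    using grid_deg_pos[OF d n] by blast
  have eigen: "\<forall>x\<in>grid_V d n. (\<Sum>y\<in>grid_V d n. grid_nlap d n x y * grid_vec d n z \<delta> y)
      = lam * grid_vec d n z \<delta> x"
    unfolding grid_vec_eq
    using grid_nlap_eigen_of_generalized[OF pos _ sum_grid_L_grid_mode[OF n \<delta> lam_sum lam_dim]]
    by blast
  define corner where "corner = (\<lambda>j. if j < d then 1 else (0::nat))"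
  have corner: "corner \<in> grid_V d n"
    using n unfolding corner_def grid_V_def by auto
  then have "grid_vec d n z \<delta> corner \<noteq> 0"
    using pos grid_mode_corner_nonzero[OF \<delta>] unfolding grid_vec_eq corner_def by fastforce
  then show ?thesis
    unfolding is_eigenpair_def using lam eigen corner by blast
qed

end
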